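(* Consider an instance of $\mathrm{BAL}(\mu,\nu)$ in the correlated setting. (1) If $\mathcal T^k\subseteq V\times\{0\}$ is a set of size $k$ maximizing $\Psi$ and $\mathcal S^k\subseteq\hat V$ is a set of size $k$ maximizing $\Phi^{\ge1}$, then $\Psi(\mathcal T^k)\ge\Phi^{\ge1}(\mathcal S^k)$. (2) Let $\varepsilon>0$ and $k\ge\nu/\varepsilon$. If $\mathcal T^k\subseteq V\times\{0\}$ is a set of size $k$ maximizing $\Psi$ and $\mathcal T^{\lfloor k/\nu\rfloor}\subseteq V\times\{0\}$ is a set of size $\lfloor k/\nu\rfloor$ maximizing $\Psi$, then $\Psi(\mathcal T^{\lfloor k/\nu\rfloor})\ge\frac{1-\varepsilon}{\nu+1}\Psi(\mathcal T^k)$. (3) Let $\mathcal T\subseteq V\times\{0\}$ be of size $\lfloor k/\nu\rfloor$. Then $\mathcal S'=\{(v,j):(v,0)\in\mathcal T,\ j\in[\nu]\}\subseteq\hat V$ has size at most $k$ and $\Phi^{\ge1}(\mathcal S')=\Psi(\mathcal T)$.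
   Context: Triggering model: for a directed graph $G=(V,E)$ and $p:E\to[0,1]$, an outcome $X=(T_v)_{v\in V}$ is obtained by having each node $v$ independently choose a subset $T_v$ of its in-neighbours $N_v$, with $T_v=S$ with probability $\prod_{u\in S}p_{uv}\prod_{u\in N_v\setminus S}(1-p_{uv})$; $\rho_X(A)$ is the set of nodes reachable from $A\subseteq V$ via arcs $\{(u,v):u\in T_v\}$. $\mathrm{BAL}(\mu,\nu)$ for integer constants $\mu\ge\nu\ge2$: instance = directed graph $G=(V,E)$, seed sets $\mathcal I=(I_1,\dots,I_\mu)$, budget $k\ge2$, and probability functions $p_1,\dots,p_\mu$; in the correlated setting $p_1=\dots=p_\mu=p$ and a single outcome $X$ w.r.t. $p$ is used by all campaigns (campaign $i$ reaches $v$ from seeds $A_i$ iff $v\in\rho_X(A_i)$). Let $\hat V=V\times[\mu]$; $\mathcal S\subseteq\hat V$ is identified with $(S_1,\dots,S_\mu)$, $S_i=\{v:(v,i)\in\mathcal S\}$. $V^j_X$ is the set of nodes reached by exactly $j$ campaigns from seeds $\mathcal I$. $\Phi^{\ge1}(\mathcal S)$ is the expected number of nodes $v\notin V^0_X$ reached by at least $\nu$ campaigns from seeds $(I_i\cup S_i)_i$ (equivalently, by none or at least $\nu$). For $\mathcal T\subseteq V\times\{0\}$ with underlying node set $T$, $\Psi(\mathcal T)=\mathbb E_X\big[\big|(\rho_X(T)\cap\bigcup_{j=1}^{\nu-1}V^j_X)\cup\bigcup_{j=\nu}^{\mu}V^j_X\big|\big]$. *)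

theory Defs
  imports Complex_Main
begin

text \<open>Triggering model on a finite directed graph (V,E) with arc probabilities p.
  Campaigns are indexed by 1..mu; seed sets are given by I :: nat => 'a set.\<close>

definition in_nbrs :: "('a \<times> 'a) set \<Rightarrow> 'a \<Rightarrow> 'a set" where
  "in_nbrs E v = {u. (u, v) \<in> E}"

definition outcomes :: "'a set \<Rightarrow> ('a \<times> 'a) set \<Rightarrow> ('a \<Rightarrow> 'a set) set" where
  "outcomes V E = {X. (\<forall>v\<in>V. X v \<subseteq> in_nbrs E v) \<and> (\<forall>v. v \<notin> V \<longrightarrow> X v = {})}"

definition outcome_prob :: "'a set \<Rightarrow> ('a \<times> 'a) set \<Rightarrow> ('a \<times> 'a \<Rightarrow> real) \<Rightarrow> ('a \<Rightarrow> 'a set) \<Rightarrow> real" where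
  "outcome_prob V E p X =
     (\<Prod>v\<in>V. \<Prod>u\<in>in_nbrs E v. if u \<in> X v then p (u, v) else 1 - p (u, v))"

definition expect :: "'a set \<Rightarrow> ('a \<times> 'a) set \<Rightarrow> ('a \<times> 'a \<Rightarrow> real) \<Rightarrow> (('a \<Rightarrow> 'a set) \<Rightarrow> real) \<Rightarrow> real" where
  "expect V E p f = (\<Sum>X\<in>outcomes V E. outcome_prob V E p X * f X)"

definition live_arcs :: "('a \<Rightarrow> 'a set) \<Rightarrow> ('a \<times> 'a) set" where
  "live_arcs X = {(u, v). u \<in> X v}"

definition reach :: "('a \<Rightarrow> 'a set) \<Rightarrow> 'a set \<Rightarrow> 'a set" where
  "reach X A = {v. \<exists>a\<in>A. (a, v) \<in> (live_arcs X)\<^sup>*}"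

definition n_reached :: "nat \<Rightarrow> ('a \<Rightarrow> 'a set) \<Rightarrow> (nat \<Rightarrow> 'a set) \<Rightarrow> 'a \<Rightarrow> nat" where
  "n_reached mu X A v = card {i \<in> {1..mu}. v \<in> reach X (A i)}"

definition Vj :: "'a set \<Rightarrow> nat \<Rightarrow> (nat \<Rightarrow> 'a set) \<Rightarrow> ('a \<Rightarrow> 'a set) \<Rightarrow> nat \<Rightarrow> 'a set" where
  "Vj V mu I X j = {v \<in> V. n_reached mu X I v = j}"

definition comp :: "('a \<times> nat) set \<Rightarrow> nat \<Rightarrow> 'a set" where
  "comp S i = {v. (v, i) \<in> S}"

definition Phi1 :: "'a set \<Rightarrow> ('a \<times> 'a) set \<Rightarrow> ('a \<times> 'a \<Rightarrow> real) \<Rightarrow> nat \<Rightarrow> nat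
                     \<Rightarrow> (nat \<Rightarrow> 'a set) \<Rightarrow> ('a \<times> nat) set \<Rightarrow> real" where
  "Phi1 V E p mu nu I S = expect V E p (\<lambda>X. real (card
      {v \<in> V. v \<notin> Vj V mu I X 0 \<and> nu \<le> n_reached mu X (\<lambda>i. I i \<union> comp S i) v}))"

definition Psi :: "'a set \<Rightarrow> ('a \<times> 'a) set \<Rightarrow> ('a \<times> 'a \<Rightarrow> real) \<Rightarrow> nat \<Rightarrow> nat
                     \<Rightarrow> (nat \<Rightarrow> 'a set) \<Rightarrow> ('a \<times> nat) set \<Rightarrow> real" where
  "Psi V E p mu nu I T = expect V E p (\<lambda>X. real (card
      ((reach X (fst ` T) \<inter> (\<Union>j\<in>{1..nu - 1}. Vj V mu I X j)) \<union> (\<Union>j\<in>{nu..mu}. Vj V mu I X j))))"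

end

theory Submission
  imports Defs
begin

text \<open>A node counted by \<open>Phi1 S\<close> was already reached by some campaign. If it is not reachable
  from the projected seed set \<open>fst ` S\<close>, the extra seeds do not change its campaign count, so
  it was reached by at least \<open>nu\<close> campaigns already; hence \<open>Phi1 S \<le> Psi (fst ` S \<times> {0})\<close>,
  which gives (1). Seeding a node set \<open>A\<close> in each of the campaigns \<open>1..nu\<close> lifts every
  already reached node that is reachable from \<open>A\<close> to \<open>nu\<close> campaigns, which gives the equality
  in (3). For (2), \<open>Psi\<close> is monotone and subadditive, so an optimal \<open>k\<close>-set splits into at
  most \<open>k div q + 1\<close> blocks of size at most \<open>q = k div nu\<close>, each worth at most the optimal
  \<open>q\<close>-set, and \<open>(1 - \<epsilon>) (k div q + 1) \<le> nu + 1\<close> as soon as \<open>k \<ge> nu / \<epsilon>\<close>.\<close>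

definition card_maximizer :: "('b set \<Rightarrow> real) \<Rightarrow> 'b set \<Rightarrow> nat \<Rightarrow> 'b set \<Rightarrow> bool" where
  "card_maximizer f U k M \<longleftrightarrow>
     M \<subseteq> U \<and> card M = k \<and> (\<forall>T. T \<subseteq> U \<and> card T = k \<longrightarrow> f T \<le> f M)"

lemma le_max_of_card_le:
  fixes f :: "'b set \<Rightarrow> real"
  assumes "finite U" "mono f" "card_maximizer f U k M" "A \<subseteq> U" "card A \<le> k"
  shows "f A \<le> f M"
proof -
  have "k \<le> card U"
    using assms(1,3) card_mono unfolding card_maximizer_def by metis
  then obtain B where "A \<subseteq> B" "B \<subseteq> U" "card B = k"
    using exists_subset_between[of A k U] assms by blast
  then have "f A \<le> f B" "f B \<le> f M"
    using assms(3) monoD[OF \<open>mono f\<close>] unfolding card_maximizer_def by auto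
  then show ?thesis by linarith
qed

lemma le_card_div_mult_max:
  fixes f :: "'b set \<Rightarrow> real"
  assumes "finite U" "mono f" and subadd: "\<And>A B. f (A \<union> B) \<le> f A + f B"
    and "0 < q" "card_maximizer f U q M" "A \<subseteq> U"
  shows "f A \<le> real (card A div q + 1) * f M"
  using \<open>A \<subseteq> U\<close>
proof (induction "card A" arbitrary: A rule: less_induct)
  case (less A)
  note max = le_max_of_card_le[OF \<open>finite U\<close> \<open>mono f\<close> \<open>card_maximizer f U q M\<close>]
  have "finite A" using less.prems \<open>finite U\<close> finite_subset by blast
  show ?case
  proof (cases "card A < q")
    case True
    then have "f A \<le> f M" using max less.prems by simp
    with True show ?thesis by simp
  next
    case False
    then obtain B where B: "B \<subseteq> A" "card B = q"
      by (metis not_less obtain_subset_with_card_n)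
    have card_rest: "card (A - B) = card A - q"
      using B \<open>finite A\<close> by (simp add: card_Diff_subset finite_subset)
    have "f A \<le> f B + f (A - B)"
      using subadd[of B "A - B"] B(1) by (simp add: Un_absorb1)
    also have "f B \<le> f M"
      using max B less.prems by auto
    also have "f (A - B) \<le> real (card (A - B) div q + 1) * f M"
      using less.hyps[of "A - B"] less.prems card_rest \<open>0 < q\<close> False by auto
    also have "card (A - B) div q + 1 = card A div q"
      using card_rest False \<open>0 < q\<close> by (simp add: le_div_geq)
    finally show ?thesis by (simp add: algebra_simps)
  qed
qed

lemma less_of_real_le_mult:
  fixes n k :: nat and e :: real
  assumes "0 < n" "e < 1" "real n \<le> e * real k"
  shows "n < k"
proof -
  have "0 < k" using assms(1,3) by (cases k) auto
  then have "e * real k < real k" using assms(2) by simp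
  with assms(3) show ?thesis by simp
qed

lemma one_minus_mult_div_div_le:
  fixes k n :: nat and e :: real
  assumes "0 < n" "e < 1" "real n \<le> e * real k"
  shows "(1 - e) * real (k div (k div n) + 1) \<le> real n + 1"
proof -
  define q where "q = k div n"
  have "0 < q"
    using less_of_real_le_mult[OF assms] \<open>0 < n\<close> by (simp add: q_def div_greater_zero_iff)
  have "0 < e * real k" using assms(1,3) by linarith
  then have "0 \<le> e" by (simp add: zero_less_mult_iff)
  have "k < q * n + n"
    using mod_less_divisor[OF \<open>0 < n\<close>, of k] div_mult_mod_eq[of k n] unfolding q_def by linarith
  then have "real k - real n \<le> real q * real n"
    by (simp add: algebra_simps flip: of_nat_mult of_nat_add)
  then have "(1 - e) * (real k / real q) \<le> real n"
    using assms(3) \<open>0 < q\<close> by (simp add: divide_le_eq algebra_simps)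
  moreover have "(1 - e) * real (k div q) \<le> (1 - e) * (real k / real q)"
    using assms(2) by (intro mult_left_mono of_nat_div_le_of_nat) simp
  ultimately show ?thesis
    using \<open>0 \<le> e\<close> by (simp add: q_def algebra_simps)
qed

lemma outcome_prob_nonneg:
  assumes "\<forall>e\<in>E. 0 \<le> p e \<and> p e \<le> 1"
  shows "0 \<le> outcome_prob V E p X"
  using assms unfolding outcome_prob_def by (auto intro!: prod_nonneg simp: in_nbrs_def)

lemma expect_mono:
  assumes "\<forall>e\<in>E. 0 \<le> p e \<and> p e \<le> 1" "\<And>X. X \<in> outcomes V E \<Longrightarrow> f X \<le> g X"
  shows "expect V E p f \<le> expect V E p g"
  unfolding expect_def
  by (intro sum_mono mult_left_mono) (simp_all add: assms outcome_prob_nonneg)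

lemma expect_nonneg:
  assumes "\<forall>e\<in>E. 0 \<le> p e \<and> p e \<le> 1" "\<And>X. 0 \<le> f X"
  shows "0 \<le> expect V E p f"
  unfolding expect_def by (intro sum_nonneg mult_nonneg_nonneg) (simp_all add: assms outcome_prob_nonneg)

lemma expect_add: "expect V E p (\<lambda>X. f X + g X) = expect V E p f + expect V E p g"
  unfolding expect_def by (simp add: distrib_left sum.distrib)

lemma reach_Un: "reach X (A \<union> B) = reach X A \<union> reach X B"
  unfolding reach_def by auto

lemma reach_mono: "A \<subseteq> B \<Longrightarrow> reach X A \<subseteq> reach X B"
  unfolding reach_def by auto

lemma n_reached_le: "n_reached mu X A v \<le> mu"
  unfolding n_reached_def by (rule order_trans[OF card_mono[of "{1..mu}"]]) auto

lemma n_reached_mono: "(\<And>i. A i \<subseteq> B i) \<Longrightarrow> n_reached mu X A v \<le> n_reached mu X B v"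
  unfolding n_reached_def by (intro card_mono) (auto dest: reach_mono[THEN subsetD])

lemma n_reached_Un_unreached:
  assumes "\<And>i. v \<notin> reach X (B i)"
  shows "n_reached mu X (\<lambda>i. A i \<union> B i) v = n_reached mu X A v"
  using assms unfolding n_reached_def reach_Un by simp

definition Psi_nodes ::
    "'a set \<Rightarrow> nat \<Rightarrow> nat \<Rightarrow> (nat \<Rightarrow> 'a set) \<Rightarrow> 'a set \<Rightarrow> ('a \<Rightarrow> 'a set) \<Rightarrow> 'a set" where
  "Psi_nodes V mu nu I A X =
     (reach X A \<inter> (\<Union>j\<in>{1..nu - 1}. Vj V mu I X j)) \<union> (\<Union>j\<in>{nu..mu}. Vj V mu I X j)"

definition Phi1_nodes ::
    "'a set \<Rightarrow> nat \<Rightarrow> nat \<Rightarrow> (nat \<Rightarrow> 'a set) \<Rightarrow> ('a \<times> nat) set \<Rightarrow> ('a \<Rightarrow> 'a set) \<Rightarrow> 'a set" where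
  "Phi1_nodes V mu nu I S X =
     {v \<in> V. v \<notin> Vj V mu I X 0 \<and> nu \<le> n_reached mu X (\<lambda>i. I i \<union> comp S i) v}"

lemma Psi_eq_expect_card_Psi_nodes:
  "Psi V E p mu nu I T = expect V E p (\<lambda>X. real (card (Psi_nodes V mu nu I (fst ` T) X)))"
  unfolding Psi_def Psi_nodes_def ..

lemma Phi1_eq_expect_card_Phi1_nodes:
  "Phi1 V E p mu nu I S = expect V E p (\<lambda>X. real (card (Phi1_nodes V mu nu I S X)))"
  unfolding Phi1_def Phi1_nodes_def ..

lemma mem_Psi_nodes_iff:
  "v \<in> Psi_nodes V mu nu I A X \<longleftrightarrow>
     v \<in> V \<and> (nu \<le> n_reached mu X I v \<or> v \<in> reach X A \<and> 0 < n_reached mu X I v)"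
  using n_reached_le[of mu X I v] unfolding Psi_nodes_def Vj_def by auto

lemma mem_Phi1_nodes_iff:
  "v \<in> Phi1_nodes V mu nu I S X \<longleftrightarrow>
     v \<in> V \<and> 0 < n_reached mu X I v \<and> nu \<le> n_reached mu X (\<lambda>i. I i \<union> comp S i) v"
  unfolding Phi1_nodes_def Vj_def by auto

lemma Psi_nodes_subset: "Psi_nodes V mu nu I A X \<subseteq> V"
  by (auto simp: mem_Psi_nodes_iff)

lemma Psi_nodes_Un_subset:
  "Psi_nodes V mu nu I (A \<union> B) X \<subseteq> Psi_nodes V mu nu I A X \<union> Psi_nodes V mu nu I B X"
  by (auto simp: mem_Psi_nodes_iff reach_Un)

lemma Phi1_nodes_subset_Psi_nodes:
  "Phi1_nodes V mu nu I S X \<subseteq> Psi_nodes V mu nu I (fst ` S) X"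
proof
  fix v assume v: "v \<in> Phi1_nodes V mu nu I S X"
  have "nu \<le> n_reached mu X I v" if "v \<notin> reach X (fst ` S)"
  proof -
    have "comp S i \<subseteq> fst ` S" for i unfolding comp_def by force
    then have "v \<notin> reach X (comp S i)" for i using that reach_mono by blast
    then show ?thesis using v by (simp add: mem_Phi1_nodes_iff n_reached_Un_unreached)
  qed
  with v show "v \<in> Psi_nodes V mu nu I (fst ` S) X"
    by (auto simp: mem_Phi1_nodes_iff mem_Psi_nodes_iff)
qed

lemma Phi1_nodes_replicate_eq:
  assumes "0 < nu" "nu \<le> mu"
  shows "Phi1_nodes V mu nu I (A \<times> {1..nu}) X = Psi_nodes V mu nu I A X"
proof
  show "Phi1_nodes V mu nu I (A \<times> {1..nu}) X \<subseteq> Psi_nodes V mu nu I A X"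
    using Phi1_nodes_subset_Psi_nodes[of V mu nu I "A \<times> {1..nu}" X] assms(1) by simp
next
  let ?seeds = "\<lambda>i. I i \<union> comp (A \<times> {1..nu}) i"
  show "Psi_nodes V mu nu I A X \<subseteq> Phi1_nodes V mu nu I (A \<times> {1..nu}) X"
  proof
    fix v assume v: "v \<in> Psi_nodes V mu nu I A X"
    have "nu \<le> n_reached mu X ?seeds v"
    proof (cases "nu \<le> n_reached mu X I v")
      case True
      then show ?thesis using n_reached_mono[of I ?seeds] by (meson sup_ge1 order_trans)
    next
      case False
      with v have "v \<in> reach X A" by (simp add: mem_Psi_nodes_iff)
      then have "{1..nu} \<subseteq> {i \<in> {1..mu}. v \<in> reach X (?seeds i)}"
        using assms(2) by (auto simp: comp_def reach_Un)
      then show ?thesis unfolding n_reached_def using card_mono[of _ "{1..nu}"] by fastforce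
    qed
    with v assms(1) show "v \<in> Phi1_nodes V mu nu I (A \<times> {1..nu}) X"
      by (auto simp: mem_Psi_nodes_iff mem_Phi1_nodes_iff)
  qed
qed

lemma Psi_nodes_mono: "A \<subseteq> B \<Longrightarrow> Psi_nodes V mu nu I A X \<subseteq> Psi_nodes V mu nu I B X"
  using reach_mono[of A B X] by (auto simp: mem_Psi_nodes_iff)

lemma mono_Psi:
  assumes "finite V" "\<forall>e\<in>E. 0 \<le> p e \<and> p e \<le> 1"
  shows "mono (Psi V E p mu nu I)"
proof (rule monoI)
  fix T T' :: "('a \<times> nat) set"
  assume "T \<subseteq> T'"
  then have "card (Psi_nodes V mu nu I (fst ` T) X) \<le> card (Psi_nodes V mu nu I (fst ` T') X)" for X
    using finite_subset[OF Psi_nodes_subset \<open>finite V\<close>] by (intro card_mono Psi_nodes_mono image_mono)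
  then show "Psi V E p mu nu I T \<le> Psi V E p mu nu I T'"
    unfolding Psi_eq_expect_card_Psi_nodes by (intro expect_mono assms(2)) simp
qed

lemma Psi_Un_le:
  assumes "finite V" "\<forall>e\<in>E. 0 \<le> p e \<and> p e \<le> 1"
  shows "Psi V E p mu nu I (T \<union> T') \<le> Psi V E p mu nu I T + Psi V E p mu nu I T'"
proof -
  have "card (Psi_nodes V mu nu I (fst ` T \<union> fst ` T') X)
      \<le> card (Psi_nodes V mu nu I (fst ` T) X) + card (Psi_nodes V mu nu I (fst ` T') X)" for X
    using finite_subset[OF Psi_nodes_subset \<open>finite V\<close>] Psi_nodes_Un_subset
    by (meson card_Un_le card_mono finite_UnI order_trans)
  then show ?thesis
    unfolding Psi_eq_expect_card_Psi_nodes image_Un expect_add[symmetric]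
    by (intro expect_mono assms(2)) (simp flip: of_nat_add)
qed

lemma Psi_nonneg:
  assumes "\<forall>e\<in>E. 0 \<le> p e \<and> p e \<le> 1"
  shows "0 \<le> Psi V E p mu nu I T"
  unfolding Psi_def by (intro expect_nonneg assms) simp

lemma Phi1_le_Psi_fst:
  assumes "finite V" "\<forall>e\<in>E. 0 \<le> p e \<and> p e \<le> 1"
  shows "Phi1 V E p mu nu I S \<le> Psi V E p mu nu I (fst ` S \<times> {0})"
proof -
  have "card (Phi1_nodes V mu nu I S X) \<le> card (Psi_nodes V mu nu I (fst ` S) X)" for X
    using finite_subset[OF Psi_nodes_subset \<open>finite V\<close>] Phi1_nodes_subset_Psi_nodes
    by (rule card_mono)
  moreover have "fst ` (fst ` S \<times> {0 :: nat}) = fst ` S" by force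
  ultimately show ?thesis
    unfolding Phi1_eq_expect_card_Phi1_nodes Psi_eq_expect_card_Psi_nodes
    by (intro expect_mono assms(2)) simp
qed

lemma Phi1_replicate_eq_Psi:
  assumes "0 < nu" "nu \<le> mu" "T \<subseteq> V \<times> {0}"
  shows "Phi1 V E p mu nu I {(v, j). (v, 0) \<in> T \<and> j \<in> {1..nu}} = Psi V E p mu nu I T"
proof -
  have replicate: "{(v, j). (v, 0) \<in> T \<and> j \<in> {1..nu}} = fst ` T \<times> {1..nu}"
    using assms(3) by force
  show ?thesis
    unfolding Phi1_eq_expect_card_Phi1_nodes Psi_eq_expect_card_Psi_nodes replicate
      Phi1_nodes_replicate_eq[OF assms(1,2)] ..
qed

lemma card_replicate_le:
  assumes "finite T"
  shows "card {(v, j). (v, 0) \<in> T \<and> j \<in> {1..nu}} \<le> card T * nu"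
proof -
  have "{(v, j). (v, 0) \<in> T \<and> j \<in> {1..nu}} = {v. (v, 0) \<in> T} \<times> {1..nu}" by auto
  moreover have "card {v. (v, 0) \<in> T} \<le> card T"
    using card_inj_on_le[of "\<lambda>v. (v, 0)" "{v. (v, 0) \<in> T}" T] assms by (auto simp: inj_on_def)
  ultimately show ?thesis by (simp add: card_cartesian_product)
qed

lemma Phi1_le_Psi_card_maximizer:
  assumes "finite V" "\<forall>e\<in>E. 0 \<le> p e \<and> p e \<le> 1"
    and "S \<subseteq> V \<times> {1..mu}" "card S \<le> k"
    and "card_maximizer (Psi V E p mu nu I) (V \<times> {0}) k T"
  shows "Phi1 V E p mu nu I S \<le> Psi V E p mu nu I T"
proof -
  have "finite S" using assms(1,3) finite_subset by blast
  then have "card (fst ` S \<times> {0 :: nat}) \<le> k"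
    using card_image_le[of S fst] assms(4) by (simp add: card_cartesian_product)
  moreover have "fst ` S \<times> {0} \<subseteq> V \<times> {0}" using assms(3) by auto
  ultimately have "Psi V E p mu nu I (fst ` S \<times> {0}) \<le> Psi V E p mu nu I T"
    using assms(1) by (intro le_max_of_card_le[OF _ mono_Psi[OF assms(1,2)] assms(5)]) simp_all
  with Phi1_le_Psi_fst[OF assms(1,2)] show ?thesis by (rule order_trans)
qed

lemma card_maximizer_Psi_div_ge:
  assumes "finite V" "\<forall>e\<in>E. 0 \<le> p e \<and> p e \<le> 1"
    and "0 < nu" "0 < e" "real nu / e \<le> real k"
    and max_k: "card_maximizer (Psi V E p mu nu I) (V \<times> {0}) k Tk"
    and max_q: "card_maximizer (Psi V E p mu nu I) (V \<times> {0}) (k div nu) Tq"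
  shows "(1 - e) / (real nu + 1) * Psi V E p mu nu I Tk \<le> Psi V E p mu nu I Tq"
proof (cases "e < 1")
  case False
  then have "(1 - e) / (real nu + 1) \<le> 0" by (simp add: divide_nonpos_pos)
  then show ?thesis
    using Psi_nonneg[OF assms(2)] by (meson mult_nonpos_nonneg order_trans)
next
  case True
  let ?Psi = "Psi V E p mu nu I"
  define M where "M = k div (k div nu) + 1"
  have nu_le: "real nu \<le> e * real k" using assms(4,5) by (simp add: divide_le_eq mult.commute)
  then have "0 < k div nu"
    using less_of_real_le_mult[OF assms(3) True nu_le] assms(3) by (simp add: div_greater_zero_iff)
  moreover have Tk: "Tk \<subseteq> V \<times> {0}" "card Tk = k"
    using max_k unfolding card_maximizer_def by simp_all
  ultimately have "?Psi Tk \<le> real M * ?Psi Tq"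
    using le_card_div_mult_max[OF _ mono_Psi[OF assms(1,2)] Psi_Un_le[OF assms(1,2)] _ max_q Tk(1)]
      assms(1) by (simp add: M_def Tk(2))
  then have "(1 - e) / (real nu + 1) * ?Psi Tk \<le> (1 - e) / (real nu + 1) * (real M * ?Psi Tq)"
    using True by (intro mult_left_mono) simp_all
  also have "\<dots> = (1 - e) * real M / (real nu + 1) * ?Psi Tq" by simp
  also have "\<dots> \<le> ?Psi Tq"
    using one_minus_mult_div_div_le[OF assms(3) True nu_le] Psi_nonneg[OF assms(2)]
    by (intro mult_left_le_one_le) (simp_all add: M_def True less_imp_le)
  finally show ?thesis .
qed

lemma replicated_seeds_feasible_and_Phi1_eq_Psi:
  assumes "finite V" "0 < nu" "nu \<le> mu" "T \<subseteq> V \<times> {0}" "card T = k div nu"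
  defines "S' \<equiv> {(v, j). (v, 0) \<in> T \<and> j \<in> {1..nu}}"
  shows "S' \<subseteq> V \<times> {1..mu}" "card S' \<le> k" "Phi1 V E p mu nu I S' = Psi V E p mu nu I T"
proof -
  show "S' \<subseteq> V \<times> {1..mu}" using assms(3,4) unfolding S'_def by auto
  have "finite T" using assms(1,4) finite_subset by blast
  then have "card S' \<le> card T * nu" unfolding S'_def by (rule card_replicate_le)
  also have "\<dots> \<le> k" using assms(5) by simp
  finally show "card S' \<le> k" .
  show "Phi1 V E p mu nu I S' = Psi V E p mu nu I T"
    unfolding S'_def using assms(2-4) by (rule Phi1_replicate_eq_Psi)
qed

theorem mainTheorem12:
  fixes V :: "'a set" and E :: "('a \<times> 'a) set" and p :: "'a \<times> 'a \<Rightarrow> real"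
    and I :: "nat \<Rightarrow> 'a set" and mu nu k :: nat
  assumes "finite V" and "E \<subseteq> V \<times> V"
    and "\<forall>e\<in>E. 0 \<le> p e \<and> p e \<le> 1"
    and "\<forall>i\<in>{1..mu}. I i \<subseteq> V"
    and "2 \<le> nu" and "nu \<le> mu" and "2 \<le> k"
  shows
   "(\<forall>Tk Sk. Tk \<subseteq> V \<times> {0} \<and> card Tk = k
        \<and> (\<forall>T. T \<subseteq> V \<times> {0} \<and> card T = k \<longrightarrow> Psi V E p mu nu I T \<le> Psi V E p mu nu I Tk)
        \<and> Sk \<subseteq> V \<times> {1..mu} \<and> card Sk = k
        \<and> (\<forall>S. S \<subseteq> V \<times> {1..mu} \<and> card S = k \<longrightarrow> Phi1 V E p mu nu I S \<le> Phi1 V E p mu nu I Sk)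
      \<longrightarrow> Psi V E p mu nu I Tk \<ge> Phi1 V E p mu nu I Sk)
    \<and> (\<forall>(\<epsilon>::real) Tk Tq. \<epsilon> > 0 \<and> real k \<ge> real nu / \<epsilon>
        \<and> Tk \<subseteq> V \<times> {0} \<and> card Tk = k
        \<and> (\<forall>T. T \<subseteq> V \<times> {0} \<and> card T = k \<longrightarrow> Psi V E p mu nu I T \<le> Psi V E p mu nu I Tk)
        \<and> Tq \<subseteq> V \<times> {0} \<and> card Tq = k div nu
        \<and> (\<forall>T. T \<subseteq> V \<times> {0} \<and> card T = k div nu \<longrightarrow> Psi V E p mu nu I T \<le> Psi V E p mu nu I Tq)
      \<longrightarrow> Psi V E p mu nu I Tq \<ge> (1 - \<epsilon>) / (real nu + 1) * Psi V E p mu nu I Tk)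
    \<and> (\<forall>T. T \<subseteq> V \<times> {0} \<and> card T = k div nu \<longrightarrow>
        (let S' = {(v, j). (v, 0) \<in> T \<and> j \<in> {1..nu}} in
          S' \<subseteq> V \<times> {1..mu} \<and> card S' \<le> k \<and> Phi1 V E p mu nu I S' = Psi V E p mu nu I T))"
proof -
  let ?Psi = "Psi V E p mu nu I" and ?Phi1 = "Phi1 V E p mu nu I"
  have "0 < nu" using assms(5) by simp
  have part1: "\<forall>Tk Sk. card_maximizer ?Psi (V \<times> {0}) k Tk
      \<and> card_maximizer ?Phi1 (V \<times> {1..mu}) k Sk \<longrightarrow> ?Phi1 Sk \<le> ?Psi Tk"
    using Phi1_le_Psi_card_maximizer[OF assms(1,3)] by (auto simp: card_maximizer_def)
  have part2: "\<forall>(\<epsilon>::real) Tk Tq. \<epsilon> > 0 \<and> real k \<ge> real nu / \<epsilon>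
      \<and> card_maximizer ?Psi (V \<times> {0}) k Tk \<and> card_maximizer ?Psi (V \<times> {0}) (k div nu) Tq
      \<longrightarrow> ?Psi Tq \<ge> (1 - \<epsilon>) / (real nu + 1) * ?Psi Tk"
    using card_maximizer_Psi_div_ge[OF assms(1,3) \<open>0 < nu\<close>] by blast
  have part3: "\<forall>T. T \<subseteq> V \<times> {0} \<and> card T = k div nu \<longrightarrow>
      (let S' = {(v, j). (v, 0) \<in> T \<and> j \<in> {1..nu}} in
        S' \<subseteq> V \<times> {1..mu} \<and> card S' \<le> k \<and> ?Phi1 S' = ?Psi T)"
    (is "\<forall>T. _ \<and> _ \<longrightarrow> ?replicated T")
  proof (intro allI impI)
    fix T :: "('a \<times> nat) set"
    assume "T \<subseteq> V \<times> {0} \<and> card T = k div nu"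
    then show "?replicated T"
      using replicated_seeds_feasible_and_Phi1_eq_Psi[OF assms(1) \<open>0 < nu\<close> assms(6), of T k]
      unfolding Let_def by blast
  qed
  show ?thesis
    using part1 part2 part3 unfolding card_maximizer_def conj_assoc by (intro conjI)
qed

end
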